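(* Let $E$ be a finite nonempty set and $X\in\mathcal{X}(2)\setminus\mathcal{X}^*(2)$. Then there exist a function $f:2^E\to\mathbb{N}$ with $X=\mathbb{B}_f(2)$, regular functions $C_e:\mathbb{N}\times\mathbb{N}\to\mathbb{R}_+$, $e\in E$, a vector $\vec t\in\mathbb{N}^E$ and integers $d,d'\in\mathbb{N}$ with $|d-d'|=1$ and $\mathbb{B}_f(d),\mathbb{B}_f(d')\neq\emptyset$, such that, writing $Q(\vec t,k)$ for the problem of minimizing $\sum_{e\in E}C_e(x_e;t_e)$ subject to $\vec x\in\mathbb{B}_f(k)$, there is an optimal solution $\vec x^*$ of $Q(\vec t,d)$ with $\|\vec x^*-\vec x'\|>1$ for every optimal solution $\vec x'$ of $Q(\vec t,d')$.
   Context: $\mathbb{N}=\{0,1,2,\dots\}$; $\|\cdot\|$ is the $L_1$-norm; $x(U)=\sum_{e\in U}x_e$. For $f:2^E\to\mathbb{N}$, $\mathbb{B}_f(d)=\{\vec x\in\mathbb{N}^E: x(U)\le f(U)\ \forall U\subseteq E,\ x(E)=d\}$. $f$ is strictly positive if $f(U)>0$ for all nonempty $U$, normalized if $f(\emptyset)=0$, monotonic if $f(U)\le f(V)$ for $U\subseteq V$. $\mathcal{X}(d)=\{\mathbb{B}_f(d): f \text{ strictly positive, normalized, monotonic}\}$, $\mathcal{X}^*(d)=\{\mathbb{B}_f(d): f\text{ strictly positive, normalized, monotonic, submodular}\}$. For $C:\mathbb{N}\times\mathbb{N}\to\mathbb{R}$, $C^-(x;t)=C(x;t)-C(x-1;t)$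 for $x\ge1$; $C$ is regular if $C^-(x;t)\le C^-(x;t+1)$ and $C^-(x;t+1)\le C^-(x+1;t)$ for all $x\ge1,t\in\mathbb{N}$. *)

theory Defs
  imports Main "HOL-Library.Extended_Nat"
begin

definition vecs :: "'a set \<Rightarrow> ('a \<Rightarrow> nat) set" where
  "vecs E = {x. \<forall>e. e \<notin> E \<longrightarrow> x e = 0}"

definition Bf :: "'a set \<Rightarrow> ('a set \<Rightarrow> nat) \<Rightarrow> nat \<Rightarrow> ('a \<Rightarrow> nat) set" where
  "Bf E f d = {x \<in> vecs E. (\<forall>U. U \<subseteq> E \<longrightarrow> sum x U \<le> f U) \<and> sum x E = d}"

definition strictly_positive :: "'a set \<Rightarrow> ('a set \<Rightarrow> nat) \<Rightarrow> bool" where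
  "strictly_positive E f \<longleftrightarrow> (\<forall>U. U \<subseteq> E \<longrightarrow> U \<noteq> {} \<longrightarrow> f U > 0)"

definition normalized :: "('a set \<Rightarrow> nat) \<Rightarrow> bool" where
  "normalized f \<longleftrightarrow> f {} = 0"

definition monotonic :: "'a set \<Rightarrow> ('a set \<Rightarrow> nat) \<Rightarrow> bool" where
  "monotonic E f \<longleftrightarrow> (\<forall>U V. U \<subseteq> V \<longrightarrow> V \<subseteq> E \<longrightarrow> f U \<le> f V)"

definition submodular :: "'a set \<Rightarrow> ('a set \<Rightarrow> nat) \<Rightarrow> bool" where
  "submodular E f \<longleftrightarrow> (\<forall>U V. U \<subseteq> E \<longrightarrow> V \<subseteq> E \<longrightarrow> f (U \<union> V) + f (U \<inter> V) \<le> f U + f V)"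

definition calX :: "'a set \<Rightarrow> nat \<Rightarrow> ('a \<Rightarrow> nat) set set" where
  "calX E d = {Bf E f d | f. strictly_positive E f \<and> normalized f \<and> monotonic E f}"

definition calXstar :: "'a set \<Rightarrow> nat \<Rightarrow> ('a \<Rightarrow> nat) set set" where
  "calXstar E d = {Bf E f d | f. strictly_positive E f \<and> normalized f \<and> monotonic E f
                                  \<and> submodular E f}"

definition Cminus :: "(nat \<Rightarrow> nat \<Rightarrow> real) \<Rightarrow> nat \<Rightarrow> nat \<Rightarrow> real" where
  "Cminus C x t = C x t - C (x - 1) t"

definition regular :: "(nat \<Rightarrow> nat \<Rightarrow> real) \<Rightarrow> bool" where
  "regular C \<longleftrightarrow> (\<forall>x t. x \<ge> 1 \<longrightarrow>
      Cminus C x t \<le> Cminus C x (t + 1) \<and> Cminus C x (t + 1) \<le> Cminus C (x + 1) t)"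

definition total_cost :: "'a set \<Rightarrow> ('a \<Rightarrow> nat \<Rightarrow> nat \<Rightarrow> real) \<Rightarrow> ('a \<Rightarrow> nat) \<Rightarrow> ('a \<Rightarrow> nat) \<Rightarrow> real" where
  "total_cost E C t x = (\<Sum>e\<in>E. C e (x e) (t e))"

definition optimal_sol :: "'a set \<Rightarrow> ('a set \<Rightarrow> nat) \<Rightarrow> ('a \<Rightarrow> nat \<Rightarrow> nat \<Rightarrow> real) \<Rightarrow> ('a \<Rightarrow> nat) \<Rightarrow> nat \<Rightarrow> ('a \<Rightarrow> nat) \<Rightarrow> bool" where
  "optimal_sol E f C t k x \<longleftrightarrow> x \<in> Bf E f k \<and> (\<forall>y \<in> Bf E f k. total_cost E C t x \<le> total_cost E C t y)"

definition l1_dist :: "'a set \<Rightarrow> ('a \<Rightarrow> nat) \<Rightarrow> ('a \<Rightarrow> nat) \<Rightarrow> nat" where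
  "l1_dist E x y = (\<Sum>e\<in>E. nat \<bar>int (x e) - int (y e)\<bar>)"

end

theory Submission
  imports Defs
begin

text \<open>Every X in \<open>\<X>(2)\<close> is also \<open>\<B>\<^sub>g(2)\<close> for the coarsest capacity g compatible with it:
  \<open>g U = max(1, max\<^sub>y\<^sub>\<in>\<^sub>X y(U))\<close> for nonempty U. Since X is not in \<open>\<X>\<^sup>*(2)\<close>, g is not submodular,
  and as g takes only the values 0, 1, 2 this forces sets U, V with \<open>g U = g V = 1\<close> and
  \<open>g (U \<union> V) = 2\<close>. Hence some x in X puts both units on \<open>U \<union> V\<close>, avoiding an element b of
  \<open>U \<inter> V\<close>, while any vector of X using b has at most one unit in \<open>U \<union> V\<close>. With linear costs
  0 at b, 1 on the rest of \<open>U \<union> V\<close> and 3 elsewhere, the unit vector at b is optimal at level 1,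
  but every optimum at level 2 avoids b and so lies at L1-distance 3 from it.\<close>

lemma regular_linear: "regular (\<lambda>x s. real (c * x))"
proof -
  have "Cminus (\<lambda>x s. real (c * x)) x t = real c" if "x \<ge> 1" for x t
    using that by (cases x) (auto simp: Cminus_def algebra_simps)
  then show ?thesis
    unfolding regular_def by auto
qed

definition rank2 :: "('a \<Rightarrow> nat) set \<Rightarrow> 'a set \<Rightarrow> nat" where
  "rank2 X U = (if U = {} then 0 else if \<exists>y\<in>X. 2 \<le> sum y U then 2 else 1)"

lemma rank2_monotonic:
  assumes "finite E"
  shows "monotonic E (rank2 X)"
  unfolding monotonic_def
proof (intro allI impI)
  fix U V assume UV: "U \<subseteq> V" "V \<subseteq> E"
  have "sum y U \<le> sum y V" for y :: "'a \<Rightarrow> nat"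
    using UV assms by (intro sum_mono2) (auto intro: finite_subset)
  then show "rank2 X U \<le> rank2 X V"
    using UV unfolding rank2_def by (auto intro: order_trans)
qed

lemma Bf_mono_capacity:
  assumes "\<And>U. U \<subseteq> E \<Longrightarrow> g U \<le> f U"
  shows "Bf E g d \<subseteq> Bf E f d"
  using assms unfolding Bf_def by (auto intro: order_trans)

lemma Bf_rank2:
  assumes "finite E" and "X \<in> calX E 2"
  shows "Bf E (rank2 X) 2 = X"
proof
  obtain f where X: "X = Bf E f 2" and pos: "strictly_positive E f"
    using assms(2) unfolding calX_def by auto
  have "rank2 X U \<le> f U" if U: "U \<subseteq> E" for U
  proof -
    have "sum y U \<le> f U" if "y \<in> X" for y
      using that U X unfolding Bf_def by blast
    moreover have "U \<noteq> {} \<Longrightarrow> 0 < f U"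
      using pos U unfolding strictly_positive_def by blast
    ultimately show ?thesis
      unfolding rank2_def using order_trans by fastforce
  qed
  then show "Bf E (rank2 X) 2 \<subseteq> X"
    unfolding X by (rule Bf_mono_capacity)
  show "X \<subseteq> Bf E (rank2 X) 2"
  proof
    fix y assume y: "y \<in> X"
    then have y_Bf: "y \<in> vecs E" "sum y E = 2"
      using X unfolding Bf_def by auto
    have "sum y U \<le> rank2 X U" if "U \<subseteq> E" for U
    proof -
      have "sum y U \<le> sum y E"
        using assms(1) that by (intro sum_mono2) auto
      then show ?thesis
        using y y_Bf(2) unfolding rank2_def by auto
    qed
    with y_Bf show "y \<in> Bf E (rank2 X) 2"
      unfolding Bf_def by blast
  qed
qed

lemma rank2_strictly_positive: "strictly_positive E (rank2 X)"
  unfolding strictly_positive_def rank2_def by auto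

lemma rank2_not_submodular:
  assumes "finite E" and "X \<in> calX E 2 - calXstar E 2"
  shows "\<not> submodular E (rank2 X)"
proof
  assume "submodular E (rank2 X)"
  moreover have "normalized (rank2 X)"
    unfolding normalized_def rank2_def by simp
  ultimately have "X \<in> calXstar E 2"
    using Bf_rank2[of E X] rank2_monotonic[OF assms(1)] rank2_strictly_positive assms
    unfolding calXstar_def by force
  then show False
    using assms(2) by blast
qed

text \<open>A violation of submodularity by a \<open>{0,1,2}\<close>-valued monotonic function that vanishes only
  at the empty set can only be of the form \<open>2 + 1 > 1 + 1\<close>.\<close>

lemma rank2_submodularity_violation:
  assumes "finite E" and "\<not> submodular E (rank2 X)"
  obtains U V where "U \<subseteq> E" "V \<subseteq> E" "U \<inter> V \<noteq> {}"
    "rank2 X U = 1" "rank2 X V = 1" "rank2 X (U \<union> V) = 2"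
proof -
  let ?g = "rank2 X"
  obtain U V where UV: "U \<subseteq> E" "V \<subseteq> E" and viol: "?g U + ?g V < ?g (U \<union> V) + ?g (U \<inter> V)"
    using assms(2) unfolding submodular_def by (auto simp: not_le)
  have le2: "?g W \<le> 2" and pos: "W \<noteq> {} \<Longrightarrow> 1 \<le> ?g W" and empty: "?g {} = 0" for W
    unfolding rank2_def by auto
  have "?g (U \<inter> V) \<le> ?g U" "?g (U \<inter> V) \<le> ?g V"
    using rank2_monotonic[OF assms(1)] UV unfolding monotonic_def by auto
  moreover have "U \<noteq> {}" "V \<noteq> {}"
    using viol by auto
  ultimately have "?g U = 1" "?g V = 1" "?g (U \<union> V) = 2" "?g (U \<inter> V) = 1"
    using viol le2[of "U \<union> V"] pos[of U] pos[of V] by linarith+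
  then have "?g U = 1" "?g V = 1" "?g (U \<union> V) = 2" "U \<inter> V \<noteq> {}"
    using empty by auto
  with UV that show ?thesis by blast
qed

lemma rank2_eq_1_imp_sum_le_1:
  assumes "rank2 X U = 1" and "y \<in> X"
  shows "sum y U \<le> 1"
  using assms unfolding rank2_def by (auto split: if_splits)

lemma rank2_eq_2_imp_ex:
  assumes "rank2 X U = 2"
  obtains x where "x \<in> X" "2 \<le> sum x U"
  using assms that unfolding rank2_def by (auto split: if_splits)

lemma crossing_pair_sums:
  fixes y :: "'a \<Rightarrow> nat"
  assumes "finite U" "finite V" "b \<in> U \<inter> V" "sum y U \<le> 1" "sum y V \<le> 1"
  shows "2 \<le> sum y (U \<union> V) \<Longrightarrow> y b = 0"
    and "1 \<le> y b \<Longrightarrow> sum y (U \<union> V) \<le> 1"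
proof -
  have "y b \<le> sum y (U \<inter> V)"
    using assms(1,3) by (intro member_le_sum) auto
  moreover have "sum y (U \<union> V) + sum y (U \<inter> V) = sum y U + sum y V"
    using sum.union_inter[OF assms(1,2)] .
  ultimately show "2 \<le> sum y (U \<union> V) \<Longrightarrow> y b = 0" "1 \<le> y b \<Longrightarrow> sum y (U \<union> V) \<le> 1"
    using assms(4,5) by linarith+
qed

lemma calX2_minus_calXstar_separated_element:
  assumes "finite E" and "X \<in> calX E 2 - calXstar E 2"
  obtains W b x where "W \<subseteq> E" "b \<in> W" "x \<in> X" "x b = 0" "2 \<le> sum x W"
    "\<forall>y\<in>X. 1 \<le> y b \<longrightarrow> sum y W \<le> 1"
proof -
  obtain U V where UV: "U \<subseteq> E" "V \<subseteq> E" "U \<inter> V \<noteq> {}"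
    and rank_U: "rank2 X U = 1" and rank_V: "rank2 X V = 1" and rank_UV: "rank2 X (U \<union> V) = 2"
    using rank2_submodularity_violation[OF assms(1) rank2_not_submodular[OF assms]] .
  obtain b where b: "b \<in> U \<inter> V"
    using UV(3) by blast
  obtain x where x: "x \<in> X" "2 \<le> sum x (U \<union> V)"
    using rank2_eq_2_imp_ex[OF rank_UV] .
  have fin: "finite U" "finite V"
    using UV assms(1) finite_subset by auto
  note le_U = rank2_eq_1_imp_sum_le_1[OF rank_U] and le_V = rank2_eq_1_imp_sum_le_1[OF rank_V]
  have "x b = 0"
    by (rule crossing_pair_sums(1)[OF fin b le_U[OF x(1)] le_V[OF x(1)] x(2)])
  moreover have "\<forall>y\<in>X. 1 \<le> y b \<longrightarrow> sum y (U \<union> V) \<le> 1"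
    using crossing_pair_sums(2)[OF fin b le_U le_V] by blast
  moreover have "U \<union> V \<subseteq> E" "b \<in> U \<union> V"
    using UV b by auto
  ultimately show thesis
    using that x by blast
qed

definition linear_cost :: "('a \<Rightarrow> nat) \<Rightarrow> 'a \<Rightarrow> nat \<Rightarrow> nat \<Rightarrow> real" where
  "linear_cost w e x s = real (w e * x)"

lemma total_linear_cost: "total_cost E (linear_cost w) t y = real (\<Sum>e\<in>E. w e * y e)"
  unfolding total_cost_def linear_cost_def by simp

definition separating_weight :: "'a \<Rightarrow> 'a set \<Rightarrow> 'a \<Rightarrow> nat" where
  "separating_weight b W e = (if e = b then 0 else if e \<in> W then 1 else 3)"

lemma unit_vector_in_Bf:
  assumes "finite E" "b \<in> E" "strictly_positive E f"
  shows "(\<lambda>e. if e = b then 1 else 0) \<in> Bf E f 1"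
proof -
  have "sum (\<lambda>e. if e = b then 1 else 0) U \<le> f U" if "U \<subseteq> E" for U
    using that assms finite_subset[OF that] unfolding strictly_positive_def
    by (cases "b \<in> U") (auto simp: Suc_le_eq)
  then show ?thesis
    using assms unfolding Bf_def vecs_def by auto
qed

lemma unit_vector_optimal:
  assumes "(\<lambda>e. if e = b then 1 else 0) \<in> Bf E f 1" and "w b = 0"
  shows "optimal_sol E f (linear_cost w) t 1 (\<lambda>e. if e = b then 1 else 0)"
proof -
  have "(\<Sum>e\<in>E. w e * (if e = b then 1 else 0)) = 0"
    using assms(2) by (intro sum.neutral) auto
  then show ?thesis
    using assms(1) unfolding optimal_sol_def total_linear_cost by (simp del: of_nat_sum)
qed

text \<open>The witness x has cost at most 2, whereas a vector using b must put a unit outside W.\<close>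

lemma optimal_avoids_separated_element:
  assumes "finite E" "W \<subseteq> E" "b \<in> W"
    and "x \<in> Bf E f 2" "x b = 0" "2 \<le> sum x W"
    and sep: "\<forall>y\<in>Bf E f 2. 1 \<le> y b \<longrightarrow> sum y W \<le> 1"
    and opt: "optimal_sol E f (linear_cost (separating_weight b W)) t 2 x'"
  shows "x' b = 0"
proof (rule ccontr)
  let ?w = "separating_weight b W"
  have split: "sum y E = sum y (E - W) + sum y W" for y :: "'a \<Rightarrow> nat"
    using sum.subset_diff[OF assms(2,1)] .
  have x_sum: "sum x E = 2"
    using assms(4) by (simp add: Bf_def)
  then have "sum x (E - W) = 0"
    using split[of x] assms(6) by linarith
  then have x_outside: "\<forall>e\<in>E - W. x e = 0"
    using assms(1) by simp
  have "(\<Sum>e\<in>E. ?w e * x e) \<le> sum x E"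
    using x_outside by (intro sum_mono) (auto simp: separating_weight_def)
  then have x_cost: "(\<Sum>e\<in>E. ?w e * x e) \<le> 2"
    using x_sum by simp
  assume "x' b \<noteq> 0"
  moreover have x'B: "x' \<in> Bf E f 2"
    using opt unfolding optimal_sol_def by blast
  ultimately have "sum x' W \<le> 1"
    using sep by auto
  then have "1 \<le> sum x' (E - W)"
    using split[of x'] x'B by (simp add: Bf_def)
  also have "sum x' (E - W) * 3 = (\<Sum>e\<in>E - W. ?w e * x' e)"
    using assms(3) by (auto simp: sum_distrib_right separating_weight_def intro: sum.cong)
  also have "\<dots> \<le> (\<Sum>e\<in>E. ?w e * x' e)"
    using assms(1) by (intro sum_mono2) auto
  finally have "3 \<le> (\<Sum>e\<in>E. ?w e * x' e)"
    by linarith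
  moreover have "(\<Sum>e\<in>E. ?w e * x' e) \<le> (\<Sum>e\<in>E. ?w e * x e)"
    using opt assms(4) unfolding optimal_sol_def total_linear_cost by (simp del: of_nat_sum)
  ultimately show False
    using x_cost by linarith
qed

lemma l1_dist_unit_vector:
  assumes "finite E" "b \<in> E" "y b = 0"
  shows "l1_dist E (\<lambda>e. if e = b then 1 else 0) y = 1 + sum y E"
proof -
  have "l1_dist E (\<lambda>e. if e = b then 1 else 0) y = (\<Sum>e\<in>E. (if e = b then 1 else 0) + y e)"
    unfolding l1_dist_def using assms(3) by (intro sum.cong) auto
  then show ?thesis
    using assms(1,2) by (simp add: sum.distrib)
qed

theorem theorem6p5:
  fixes E :: "'a set" and X :: "('a \<Rightarrow> nat) set"
  assumes "finite E" and "E \<noteq> {}"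
    and "X \<in> calX E 2 - calXstar E 2"
  shows "\<exists>f C t d d'.
           X = Bf E f 2 \<and>
           (\<forall>e\<in>E. regular (C e) \<and> (\<forall>x s. C e x s \<ge> 0)) \<and>
           t \<in> vecs E \<and>
           \<bar>int d - int d'\<bar> = 1 \<and> Bf E f d \<noteq> {} \<and> Bf E f d' \<noteq> {} \<and>
           (\<exists>xs. optimal_sol E f C t d xs \<and>
                 (\<forall>x'. optimal_sol E f C t d' x' \<longrightarrow> l1_dist E xs x' > 1))"
proof -
  let ?f = "rank2 X"
  have X: "Bf E ?f 2 = X"
    using Bf_rank2 assms by blast
  obtain W b x where W: "W \<subseteq> E" "b \<in> W" and x: "x \<in> X" "x b = 0" "2 \<le> sum x W"
    and sep: "\<forall>y\<in>X. 1 \<le> y b \<longrightarrow> sum y W \<le> 1"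
    using calX2_minus_calXstar_separated_element[OF assms(1,3)] .
  have x_Bf: "x \<in> Bf E ?f 2" and sep_Bf: "\<forall>y\<in>Bf E ?f 2. 1 \<le> y b \<longrightarrow> sum y W \<le> 1"
    using x(1) sep by (simp_all only: X)
  let ?xs = "\<lambda>e. if e = b then 1 else 0" and ?C = "linear_cost (separating_weight b W)"
  have unit: "?xs \<in> Bf E ?f 1"
    using unit_vector_in_Bf[OF assms(1) _ rank2_strictly_positive] W by blast
  have "optimal_sol E ?f ?C (\<lambda>_. 0) 2 x' \<Longrightarrow> x' b = 0" for x'
    using optimal_avoids_separated_element[OF assms(1) W x_Bf x(2,3) sep_Bf] .
  then have "optimal_sol E ?f ?C (\<lambda>_. 0) 2 x' \<Longrightarrow> l1_dist E ?xs x' > 1" for x'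
    using l1_dist_unit_vector[of E b x'] assms(1) W by (auto simp: optimal_sol_def Bf_def)
  moreover have "optimal_sol E ?f ?C (\<lambda>_. 0) 1 ?xs"
    using unit_vector_optimal[OF unit] by (simp add: separating_weight_def)
  moreover have "\<forall>e\<in>E. regular (?C e) \<and> (\<forall>x s. ?C e x s \<ge> 0)"
    using regular_linear by (simp add: linear_cost_def[abs_def])
  moreover have "Bf E ?f 1 \<noteq> {}" "Bf E ?f 2 \<noteq> {}" "(\<lambda>_. 0) \<in> vecs E"
    using unit x_Bf by (auto simp: vecs_def)
  moreover have "\<bar>int 1 - int 2\<bar> = 1"
    by simp
  ultimately show ?thesis
    using X by (intro exI[of _ ?f] exI[of _ ?C] exI[of _ "\<lambda>_. 0"] exI[of _ 1] exI[of _ 2]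
        conjI exI[of _ ?xs] allI impI) simp_all
qed

end
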